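(* Let $\epsilon\in(0,1)$, $u_0\in\mathbb{R}$, $h>0$, and let $(u_n)_{n\ge0}$ be a sequence of real numbers starting at $u_0$ and satisfying the Crank–Nicolson scheme $$\frac{u_n-u_{n-1}}{h}+\frac{1}{2\epsilon^2}\big(u_n^3-u_n\big)+\frac{1}{2\epsilon^2}\big(u_{n-1}^3-u_{n-1}\big)=0,\qquad n\ge1.$$ (i) If $u_0\in\{0,1,-1\}$ and $h\le 2\epsilon^2$, then $u_n=\mathrm{sign}(u_0)$ for all $n\ge1$. (ii) If $u_0\notin\{0,1,-1\}$, define $h^*(u_0,\epsilon)=\frac{2\epsilon^2}{u_0^2+|u_0|}$ if $|u_0|>1$ and $h^*(u_0,\epsilon)=\epsilon^2$ if $0<|u_0|<1$. Then $h^*>0$ and for every $h\in(0,h^*]$ the sequence $(u_n)$ is monotone and converges to $\mathrm{sign}(u_0)$ as $n\to\infty$. Moreover, $\inf_{u_0\in\mathbb{R}\setminus\{0,\pm1\}}h^*(u_0,\epsilon)=0$.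
   Context: The scheme discretizes the ODE $u'(t)+\frac{1}{\epsilon^2}(u^3-u)=0$, $u(0)=u_0$. For $h\le 2\epsilon^2$ each step equation has a unique real solution $u_n$. Here $\mathrm{sign}(0)=0$. *)

theory Defs
  imports Complex_Main
begin

text \<open>Crank--Nicolson step relation for u' + (u^3-u)/eps^2 = 0.\<close>
definition CN_scheme :: "real \<Rightarrow> real \<Rightarrow> (nat \<Rightarrow> real) \<Rightarrow> bool" where
  "CN_scheme eps h u \<longleftrightarrow>
     (\<forall>n\<ge>1. (u n - u (n - 1)) / h + (1 / (2 * eps^2)) * (u n ^ 3 - u n)
              + (1 / (2 * eps^2)) * (u (n - 1) ^ 3 - u (n - 1)) = 0)"

text \<open>Threshold step size h*(u0, eps) (only meaningful for u0 not in {0,1,-1}).\<close>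
definition hstar :: "real \<Rightarrow> real \<Rightarrow> real" where
  "hstar u0 eps = (if \<bar>u0\<bar> > 1 then 2 * eps^2 / (u0^2 + \<bar>u0\<bar>) else eps^2)"

end

theory Submission
  imports Defs
begin

text \<open>
  With \<open>k = h / (2 eps^2)\<close> the scheme reads \<open>G(u (n + 1)) = F(u n)\<close> for
  \<open>G(x) = x + k (x^3 - x)\<close> and \<open>F(x) = x - k (x^3 - x)\<close>, so it depends on \<open>h\<close> and
  \<open>eps\<close> only through \<open>k\<close>. For \<open>k \<le> 1\<close> the implicit part \<open>G\<close> is strictly increasing,
  so comparing \<open>F(u n)\<close> with \<open>G(1) = 1\<close> and with \<open>G(u n)\<close> compares \<open>u (n + 1)\<close> with \<open>1\<close>
  and with \<open>u n\<close>. Since \<open>F(x) - 1 = (x - 1)(1 - k x (x + 1))\<close>, under the step size bound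
  \<open>F(u n)\<close> lies between \<open>1\<close> and \<open>G(u n)\<close>: the orbit moves monotonically towards \<open>1\<close> without
  crossing it, and its limit is a root of \<open>x^3 = x\<close>, hence \<open>1\<close>. Negative initial values
  follow because the scheme is odd. The infimum of \<open>h*\<close> is \<open>0\<close> since
  \<open>h*(v, eps) \<le> 2 eps^2 / v\<close> for \<open>v > 1\<close>.
\<close>

definition cn_implicit :: "real \<Rightarrow> real \<Rightarrow> real" where
  "cn_implicit k x = x + k * (x^3 - x)"

definition cn_explicit :: "real \<Rightarrow> real \<Rightarrow> real" where
  "cn_explicit k x = x - k * (x^3 - x)"

definition cn_orbit :: "real \<Rightarrow> (nat \<Rightarrow> real) \<Rightarrow> bool" where
  "cn_orbit k u \<longleftrightarrow> (\<forall>n. cn_implicit k (u (Suc n)) = cn_explicit k (u n))"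

lemma CN_scheme_imp_cn_orbit:
  assumes "eps \<noteq> 0" "h \<noteq> 0" "CN_scheme eps h u"
  shows "cn_orbit (h / (2 * eps^2)) u"
  unfolding cn_orbit_def
proof
  fix n
  have "(u (Suc n) - u n) / h + (1 / (2 * eps^2)) * (u (Suc n) ^ 3 - u (Suc n))
          + (1 / (2 * eps^2)) * (u n ^ 3 - u n) = 0"
    using assms(3) unfolding CN_scheme_def by (metis diff_Suc_1 le_add1 plus_1_eq_Suc)
  then have "u (Suc n) - u n = h * - ((1 / (2 * eps^2)) * (u (Suc n) ^ 3 - u (Suc n))
          + (1 / (2 * eps^2)) * (u n ^ 3 - u n))"
    using assms(2) by (simp add: nonzero_divide_eq_eq add_eq_0_iff)
  then show "cn_implicit (h / (2 * eps^2)) (u (Suc n)) = cn_explicit (h / (2 * eps^2)) (u n)"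
    unfolding cn_implicit_def cn_explicit_def by (simp add: algebra_simps)
qed

lemma cube_eq_self_iff: "(x::real)^3 = x \<longleftrightarrow> x \<in> {0, 1, -1}"
proof -
  have "x^3 - x = x * (x - 1) * (x + 1)" by (simp add: power3_eq_cube algebra_simps)
  then show ?thesis by auto
qed

lemma strict_mono_cn_implicit:
  assumes "0 \<le> k" "k \<le> 1"
  shows "strict_mono (cn_implicit k)"
proof (rule strict_monoI)
  fix x y :: real
  assume "x < y"
  have "x^2 + x*y + y^2 = (y + x/2)^2 + 3/4 * x^2" by (simp add: power2_eq_square algebra_simps)
  also have "\<dots> > 0"
  proof (cases "x = 0")
    case True
    with \<open>x < y\<close> show ?thesis by simp
  qed (simp add: add_nonneg_pos)
  finally have q: "x^2 + x*y + y^2 > 0" .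
  have p: "(1 - k) + k * (x^2 + x*y + y^2) > 0"
  proof (cases "k = 0")
    case False
    with assms(1) q have "k * (x^2 + x*y + y^2) > 0" by simp
    with assms(2) show ?thesis by linarith
  qed simp
  have "0 < (y - x) * ((1 - k) + k * (x^2 + x*y + y^2))" using \<open>x < y\<close> p by simp
  also have "\<dots> = cn_implicit k y - cn_implicit k x"
    unfolding cn_implicit_def by (simp add: power2_eq_square power3_eq_cube algebra_simps)
  finally show "cn_implicit k x < cn_implicit k y" by simp
qed

lemma cn_orbit_uminus:
  assumes "cn_orbit k u"
  shows "cn_orbit k (\<lambda>n. - u n)"
  using assms unfolding cn_orbit_def cn_implicit_def cn_explicit_def
  by (simp add: power3_eq_cube algebra_simps)

lemma cn_orbit_fixed_point:
  assumes "0 \<le> k" "k \<le> 1" "cn_orbit k u" "u 0 ^ 3 = u 0"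
  shows "u n = u 0"
proof (induction n)
  case (Suc n)
  have "cn_implicit k (u (Suc n)) = cn_implicit k (u 0)"
    using assms(3,4) Suc unfolding cn_orbit_def cn_implicit_def cn_explicit_def by simp
  then show ?case using strict_mono_cn_implicit[OF assms(1,2)] by (simp add: strict_mono_eq)
qed simp

lemma cn_orbit_limit_cube_eq:
  assumes "k \<noteq> 0" "cn_orbit k u" "u \<longlonglongrightarrow> L"
  shows "L^3 = L"
proof -
  have "(\<lambda>n. cn_implicit k (u (Suc n))) \<longlonglongrightarrow> cn_implicit k L"
    using LIMSEQ_Suc[OF assms(3)] unfolding cn_implicit_def by (intro tendsto_intros)
  moreover have "(\<lambda>n. cn_implicit k (u (Suc n))) \<longlonglongrightarrow> cn_explicit k L"
    using assms(2,3) unfolding cn_orbit_def cn_explicit_def by (simp, intro tendsto_intros)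
  ultimately have "cn_implicit k L = cn_explicit k L" by (rule LIMSEQ_unique)
  with assms(1) show ?thesis unfolding cn_implicit_def cn_explicit_def by simp
qed

lemma cn_step_above_one:
  assumes "0 \<le> k" "k * (x^2 + x) \<le> 1" "1 \<le> x" "cn_implicit k y = cn_explicit k x"
  shows "1 \<le> y \<and> y \<le> x"
proof -
  have "x^2 + x \<ge> 1" using assms(3) zero_le_power2[of x] by linarith
  then have "k * 1 \<le> k * (x^2 + x)" using assms(1) by (rule mult_left_mono)
  then have "k \<le> 1" using assms(2) by simp
  with assms(1) have g_mono: "strict_mono (cn_implicit k)" by (intro strict_mono_cn_implicit)
  have "0 \<le> (x - 1) * (1 - k * (x^2 + x))" using assms(2,3) by simp
  also have "\<dots> = cn_explicit k x - 1"
    unfolding cn_explicit_def by (simp add: power2_eq_square power3_eq_cube algebra_simps)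
  finally have lower: "cn_implicit k 1 \<le> cn_implicit k y"
    using assms(4) by (simp add: cn_implicit_def)
  have "x^3 - x = x * (x^2 - 1)" by (simp add: power2_eq_square power3_eq_cube algebra_simps)
  then have "x^3 - x \<ge> 0" using assms(3) by simp
  with assms(1) have "k * (x^3 - x) \<ge> 0" by simp
  then have upper: "cn_implicit k y \<le> cn_implicit k x"
    using assms(4) unfolding cn_implicit_def cn_explicit_def by linarith
  from lower upper g_mono show ?thesis by (simp add: strict_mono_less_eq)
qed

lemma cn_step_below_one:
  assumes "0 \<le> k" "k \<le> 1/2" "0 \<le> x" "x < 1" "cn_implicit k y = cn_explicit k x"
  shows "x \<le> y \<and> y < 1"
proof -
  have g_mono: "strict_mono (cn_implicit k)" using assms(1,2) by (intro strict_mono_cn_implicit) auto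
  have "x^2 + x < 2" using assms(3,4) power_le_one[of x 2] by linarith
  then have "1/2 * (x^2 + x) < 1" by simp
  moreover have "k * (x^2 + x) \<le> 1/2 * (x^2 + x)" using assms(2,3) by (intro mult_right_mono) auto
  ultimately have "k * (x^2 + x) < 1" by simp
  with assms(4) have "0 < (1 - x) * (1 - k * (x^2 + x))" by simp
  also have "\<dots> = 1 - cn_explicit k x"
    unfolding cn_explicit_def by (simp add: power2_eq_square power3_eq_cube algebra_simps)
  finally have upper: "cn_implicit k y < cn_implicit k 1"
    using assms(5) by (simp add: cn_implicit_def)
  have "x^3 - x = x * (x^2 - 1)" by (simp add: power2_eq_square power3_eq_cube algebra_simps)
  then have "x^3 - x \<le> 0" using assms(3,4) by (simp add: mult_nonneg_nonpos power_le_one)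
  with assms(1) have "k * (x^3 - x) \<le> 0" by (simp add: mult_nonneg_nonpos)
  then have lower: "cn_implicit k x \<le> cn_implicit k y"
    using assms(5) unfolding cn_implicit_def cn_explicit_def by linarith
  from lower upper g_mono show ?thesis by (simp add: strict_mono_less_eq strict_mono_less)
qed

lemma cn_orbit_above_one:
  assumes "0 < k" "k * (u 0^2 + u 0) \<le> 1" "1 \<le> u 0" "cn_orbit k u"
  shows "antimono u \<and> u \<longlonglongrightarrow> 1"
proof -
  have step: "1 \<le> u (Suc n) \<and> u (Suc n) \<le> u n" if "1 \<le> u n" "k * (u n^2 + u n) \<le> 1" for n
    using cn_step_above_one[of k "u n" "u (Suc n)"] that assms(1,4) by (simp add: cn_orbit_def)
  have inv: "1 \<le> u n \<and> k * (u n^2 + u n) \<le> 1" for n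
  proof (induction n)
    case (Suc n)
    with step have "1 \<le> u (Suc n)" "u (Suc n) \<le> u n" by auto
    then have "u (Suc n)^2 + u (Suc n) \<le> u n^2 + u n" by (simp add: add_mono power_mono)
    with assms(1) have "k * (u (Suc n)^2 + u (Suc n)) \<le> k * (u n^2 + u n)" by simp
    with Suc \<open>1 \<le> u (Suc n)\<close> show ?case by simp
  qed (use assms(2,3) in simp)
  have "antimono u" unfolding decseq_Suc_iff using step inv by blast
  moreover have "\<forall>n. 1 \<le> u n" using inv by simp
  then obtain L where L: "u \<longlonglongrightarrow> L" "\<forall>n. L \<le> u n"
    using decseq_convergent[OF \<open>antimono u\<close>] by blast
  moreover have "1 \<le> L" using inv by (intro LIMSEQ_le_const[OF L(1)]) auto
  moreover have "L \<in> {0, 1, -1}"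
    using cn_orbit_limit_cube_eq[OF _ assms(4) L(1)] assms(1) cube_eq_self_iff by simp
  ultimately show ?thesis by auto
qed

lemma cn_orbit_below_one:
  assumes "0 < k" "k \<le> 1/2" "0 < u 0" "u 0 < 1" "cn_orbit k u"
  shows "mono u \<and> u \<longlonglongrightarrow> 1"
proof -
  have step: "u n \<le> u (Suc n) \<and> u (Suc n) < 1" if "0 < u n" "u n < 1" for n
    using cn_step_below_one[of k "u n" "u (Suc n)"] that assms(1,2,5) by (simp add: cn_orbit_def)
  have inv: "0 < u n \<and> u n < 1" for n
  proof (induction n)
    case (Suc n)
    with step[of n] show ?case by simp
  qed (use assms(3,4) in simp)
  have "mono u" unfolding incseq_Suc_iff using step inv by blast
  moreover have "\<forall>n. u n \<le> 1" using inv by (simp add: less_imp_le)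
  then obtain L where L: "u \<longlonglongrightarrow> L" "\<forall>n. u n \<le> L"
    using incseq_convergent[OF \<open>mono u\<close>] by blast
  moreover have "0 < L" using L(2) assms(3) by (meson less_le_trans)
  moreover have "L \<in> {0, 1, -1}"
    using cn_orbit_limit_cube_eq[OF _ assms(5) L(1)] assms(1) cube_eq_self_iff by simp
  ultimately show ?thesis by auto
qed

lemma hstar_scale: "hstar u0 eps = eps^2 * hstar u0 1"
  unfolding hstar_def by simp

lemma hstar_uminus: "hstar (- u0) eps = hstar u0 eps"
  unfolding hstar_def by simp

lemma hstar_pos:
  assumes "eps \<noteq> 0" "u0 \<noteq> 0"
  shows "0 < hstar u0 eps"
  using assms unfolding hstar_def by (simp add: add_pos_nonneg)

lemma hstar_nonneg: "0 \<le> hstar u0 eps"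
  unfolding hstar_def by simp

lemma INF_hstar_eq_0: "(INF v\<in>- {0, 1, -1}. hstar v eps) = 0"
proof (rule antisym)
  have bdd: "bdd_below ((\<lambda>v. hstar v eps) ` (- {0, 1, -1}))"
    using hstar_nonneg by (intro bdd_belowI2)
  show "(INF v\<in>- {0, 1, -1}. hstar v eps) \<le> 0"
  proof (rule field_le_epsilon)
    fix d :: real
    assume "0 < d"
    define v where "v = 2 + 2 * eps^2 / d"
    have "v \<ge> 2" using \<open>0 < d\<close> by (simp add: v_def)
    then have "v \<in> - {0, 1, -1}" and hv: "hstar v eps = 2 * eps^2 / (v^2 + v)"
      by (auto simp: hstar_def)
    have "2 * eps^2 \<le> d * v" using \<open>0 < d\<close> by (simp add: v_def field_simps)
    also have "\<dots> \<le> d * (v^2 + v)" using \<open>0 < d\<close> by simp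
    finally have "hstar v eps \<le> d"
      unfolding hv using \<open>v \<ge> 2\<close> by (simp add: divide_le_eq mult.commute add_pos_pos)
    with cINF_lower[OF bdd \<open>v \<in> _\<close>] show "(INF v\<in>- {0, 1, -1}. hstar v eps) \<le> 0 + d"
      by simp
  qed
  have "(2::real) \<in> - {0, 1, -1}" by simp
  then have "- {0, 1, -1 :: real} \<noteq> {}" by blast
  then show "0 \<le> (INF v\<in>- {0, 1, -1}. hstar v eps)"
    using hstar_nonneg by (intro cINF_greatest) auto
qed

lemma cn_orbit_tendsto_one:
  assumes "0 < k" "0 < u 0" "u 0 \<noteq> 1" "2 * k \<le> hstar (u 0) 1" "cn_orbit k u"
  shows "(mono u \<or> antimono u) \<and> u \<longlonglongrightarrow> 1"
proof (cases "1 < u 0")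
  case True
  with assms(4) have "k * (u 0^2 + u 0) \<le> 1"
    by (simp add: hstar_def field_simps add_pos_pos)
  with cn_orbit_above_one assms(1,5) True show ?thesis by simp
next
  case False
  with assms(2,3,4) have "k \<le> 1/2" "u 0 < 1" by (auto simp: hstar_def)
  with cn_orbit_below_one assms(1,2,5) show ?thesis by simp
qed

lemma cn_orbit_tendsto_sgn:
  assumes "0 < k" "u 0 \<notin> {0, 1, -1}" "2 * k \<le> hstar (u 0) 1" "cn_orbit k u"
  shows "(mono u \<or> antimono u) \<and> u \<longlonglongrightarrow> sgn (u 0)"
proof (cases "0 < u 0")
  case True
  with cn_orbit_tendsto_one assms show ?thesis by simp
next
  case False
  with assms have "(mono (\<lambda>n. - u n) \<or> antimono (\<lambda>n. - u n)) \<and> (\<lambda>n. - u n) \<longlonglongrightarrow> 1"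
    by (intro cn_orbit_tendsto_one cn_orbit_uminus) (auto simp: hstar_uminus)
  then have "(antimono u \<or> mono u) \<and> u \<longlonglongrightarrow> -1"
    by (simp add: decseq_eq_incseq[of u] decseq_eq_incseq[of "\<lambda>n. - u n"] tendsto_minus_cancel_left)
  with False assms(2) show ?thesis by auto
qed

theorem theorem3p2:
  fixes eps u0 h :: real and u :: "nat \<Rightarrow> real"
  assumes eps: "0 < eps" "eps < 1"
    and h: "0 < h"
    and init: "u 0 = u0"
    and scheme: "CN_scheme eps h u"
  shows "(u0 \<in> {0, 1, -1} \<and> h \<le> 2 * eps^2 \<longrightarrow> (\<forall>n\<ge>1. u n = sgn u0))
       \<and> (u0 \<notin> {0, 1, -1} \<longrightarrow>
            0 < hstar u0 eps \<and>
            (h \<le> hstar u0 eps \<longrightarrow> (mono u \<or> antimono u) \<and> u \<longlonglongrightarrow> sgn u0))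
       \<and> (INF v\<in>- {0, 1, -1}. hstar v eps) = 0"
proof -
  define k where "k = h / (2 * eps^2)"
  have "0 < k" using eps(1) h by (simp add: k_def)
  have orbit: "cn_orbit k u"
    unfolding k_def using eps(1) h scheme by (simp add: CN_scheme_imp_cn_orbit)
  have h_le_iff: "h \<le> eps^2 * c \<longleftrightarrow> 2 * k \<le> c" for c
    using eps(1) by (simp add: k_def field_simps)
  have "\<forall>n\<ge>1. u n = sgn u0" if "u0 \<in> {0, 1, -1}" "h \<le> 2 * eps^2"
  proof -
    from that have "k \<le> 1" using h_le_iff[of 2] by (simp add: mult.commute)
    with cn_orbit_fixed_point[OF _ _ orbit] \<open>0 < k\<close> have "u n = u0" for n
      using that(1) init cube_eq_self_iff by simp
    with that(1) show ?thesis by auto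
  qed
  moreover have "0 < hstar u0 eps \<and>
      (h \<le> hstar u0 eps \<longrightarrow> (mono u \<or> antimono u) \<and> u \<longlonglongrightarrow> sgn u0)" if "u0 \<notin> {0, 1, -1}"
    using that eps(1) hstar_pos cn_orbit_tendsto_sgn[OF \<open>0 < k\<close> _ _ orbit] init
      h_le_iff hstar_scale[of u0 eps] by auto
  ultimately show ?thesis using INF_hstar_eq_0 by blast
qed

end
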